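(* For any integers $r\ge t\ge 2$, there exists a connected graph $G$ such that $\mathrm{gp}(G)=r$ and $\omega(G_{\rm SR})=t$.
   Context: All graphs are finite and simple. For a connected graph $G$, a set $S\subseteq V(G)$ is a general position set if no three pairwise distinct vertices of $S$ lie on a common geodesic (shortest path); $\mathrm{gp}(G)$ is the maximum cardinality of a general position set. A vertex $u$ is maximally distant from $v$ if every neighbor $w$ of $u$ satisfies $d_G(v,w)\le d_G(u,v)$; $u,v$ are mutually maximally distant (MMD) if each is maximally distant from the other. The strong resolving graph $G_{\rm SR}$ has vertex set $V(G)$, distinct vertices adjacent iff MMD in $G$. $\omega$ is the clique number. *)

theory Defs
  imports Main
begin

definition simple_graph :: "'a set \<Rightarrow> ('a \<Rightarrow> 'a \<Rightarrow> bool) \<Rightarrow> bool" where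
  "simple_graph V E \<longleftrightarrow> finite V \<and> (\<forall>u v. E u v \<longrightarrow> u \<in> V \<and> v \<in> V)
     \<and> (\<forall>u v. E u v \<longrightarrow> E v u) \<and> (\<forall>u. \<not> E u u)"

definition walk :: "'a set \<Rightarrow> ('a \<Rightarrow> 'a \<Rightarrow> bool) \<Rightarrow> 'a list \<Rightarrow> bool" where
  "walk V E p \<longleftrightarrow> p \<noteq> [] \<and> set p \<subseteq> V \<and> (\<forall>i. Suc i < length p \<longrightarrow> E (p ! i) (p ! Suc i))"

definition walk_between :: "'a set \<Rightarrow> ('a \<Rightarrow> 'a \<Rightarrow> bool) \<Rightarrow> 'a \<Rightarrow> 'a \<Rightarrow> 'a list \<Rightarrow> bool" where
  "walk_between V E u v p \<longleftrightarrow> walk V E p \<and> hd p = u \<and> last p = v"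

definition connected_graph :: "'a set \<Rightarrow> ('a \<Rightarrow> 'a \<Rightarrow> bool) \<Rightarrow> bool" where
  "connected_graph V E \<longleftrightarrow> simple_graph V E \<and> V \<noteq> {}
     \<and> (\<forall>u\<in>V. \<forall>v\<in>V. \<exists>p. walk_between V E u v p)"

definition dist :: "'a set \<Rightarrow> ('a \<Rightarrow> 'a \<Rightarrow> bool) \<Rightarrow> 'a \<Rightarrow> 'a \<Rightarrow> nat" where
  "dist V E u v = (LEAST n. \<exists>p. walk_between V E u v p \<and> length p = Suc n)"

definition geodesic :: "'a set \<Rightarrow> ('a \<Rightarrow> 'a \<Rightarrow> bool) \<Rightarrow> 'a list \<Rightarrow> bool" where
  "geodesic V E p \<longleftrightarrow> walk V E p \<and> length p = Suc (dist V E (hd p) (last p))"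

definition gp_set :: "'a set \<Rightarrow> ('a \<Rightarrow> 'a \<Rightarrow> bool) \<Rightarrow> 'a set \<Rightarrow> bool" where
  "gp_set V E S \<longleftrightarrow> S \<subseteq> V \<and> (\<forall>x\<in>S. \<forall>y\<in>S. \<forall>z\<in>S.
      x \<noteq> y \<and> y \<noteq> z \<and> x \<noteq> z \<longrightarrow>
      \<not> (\<exists>p. geodesic V E p \<and> x \<in> set p \<and> y \<in> set p \<and> z \<in> set p))"

definition gp_number :: "'a set \<Rightarrow> ('a \<Rightarrow> 'a \<Rightarrow> bool) \<Rightarrow> nat" where
  "gp_number V E = Max (card ` {S. gp_set V E S})"

definition maximally_distant :: "'a set \<Rightarrow> ('a \<Rightarrow> 'a \<Rightarrow> bool) \<Rightarrow> 'a \<Rightarrow> 'a \<Rightarrow> bool" where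
  "maximally_distant V E u v \<longleftrightarrow> (\<forall>w\<in>V. E u w \<longrightarrow> dist V E v w \<le> dist V E u v)"

definition MMD :: "'a set \<Rightarrow> ('a \<Rightarrow> 'a \<Rightarrow> bool) \<Rightarrow> 'a \<Rightarrow> 'a \<Rightarrow> bool" where
  "MMD V E u v \<longleftrightarrow> maximally_distant V E u v \<and> maximally_distant V E v u"

definition SR_edge :: "'a set \<Rightarrow> ('a \<Rightarrow> 'a \<Rightarrow> bool) \<Rightarrow> 'a \<Rightarrow> 'a \<Rightarrow> bool" where
  "SR_edge V E u v \<longleftrightarrow> u \<in> V \<and> v \<in> V \<and> u \<noteq> v \<and> MMD V E u v"

definition clique :: "'a set \<Rightarrow> ('a \<Rightarrow> 'a \<Rightarrow> bool) \<Rightarrow> 'a set \<Rightarrow> bool" where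
  "clique V E K \<longleftrightarrow> K \<subseteq> V \<and> (\<forall>x\<in>K. \<forall>y\<in>K. x \<noteq> y \<longrightarrow> E x y)"

definition clique_number :: "'a set \<Rightarrow> ('a \<Rightarrow> 'a \<Rightarrow> bool) \<Rightarrow> nat" where
  "clique_number V E = Max (card ` {K. clique V E K})"

end

theory Submission
  imports Defs
begin

text \<open>The witness is the complete multipartite graph with r parts of size t. It has diameter 2,
  so a geodesic through three distinct vertices is an induced path a - b - c; hence a general
  position set either lies inside one part or meets every part at most once, and
  gp = max r t = r. Two vertices of the same part are at distance 2, the diameter, so they are
  mutually maximally distant; adjacent vertices u, v are not, since u has a neighbour in the part
  of v at distance 2 from v. Thus the strong resolving graph is a disjoint union of r copies
  of K_t, whose clique number is t.\<close>

lemma walk_between_singleton: "u \<in> V \<Longrightarrow> walk_between V E u u [u]"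
  by (simp add: walk_between_def walk_def)

lemma walk_between_edge: "u \<in> V \<Longrightarrow> v \<in> V \<Longrightarrow> E u v \<Longrightarrow> walk_between V E u v [u, v]"
  by (auto simp: walk_between_def walk_def less_Suc_eq)

lemma walk_between_path3:
  "u \<in> V \<Longrightarrow> w \<in> V \<Longrightarrow> v \<in> V \<Longrightarrow> E u w \<Longrightarrow> E w v \<Longrightarrow> walk_between V E u v [u, w, v]"
  by (auto simp: walk_between_def walk_def less_Suc_eq nth_Cons split: nat.splits)

lemma dist_le_walk_length: "walk_between V E u v p \<Longrightarrow> dist V E u v \<le> length p - 1"
proof -
  assume walk: "walk_between V E u v p"
  then have "length p = Suc (length p - 1)" by (simp add: walk_between_def walk_def)
  with walk show ?thesis unfolding dist_def by (metis (mono_tags, lifting) Least_le)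
qed

lemma dist_attained:
  assumes "walk_between V E u v q"
  shows "\<exists>p. walk_between V E u v p \<and> length p = Suc (dist V E u v)"
proof -
  have "\<exists>n p. walk_between V E u v p \<and> length p = Suc n"
    using assms by (metis Suc_pred length_greater_0_conv walk_between_def walk_def)
  then show ?thesis unfolding dist_def by (rule LeastI_ex)
qed

lemma dist_eq_0_imp_eq:
  assumes "walk_between V E u v q" and "dist V E u v = 0"
  shows "u = v"
proof -
  obtain p where "walk_between V E u v p" "length p = Suc 0"
    using dist_attained[OF assms(1)] assms(2) by auto
  then show ?thesis by (auto simp: walk_between_def length_Suc_conv)
qed

lemma dist_eq_1_imp_adjacent:
  assumes "walk_between V E u v q" and "dist V E u v = 1"
  shows "E u v"
proof -
  obtain p where p: "walk_between V E u v p" "length p = Suc (Suc 0)"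
    using dist_attained[OF assms(1)] assms(2) by auto
  then obtain a b where "p = [a, b]" by (auto simp: length_Suc_conv)
  with p(1) show ?thesis by (auto simp: walk_between_def walk_def)
qed

lemma Max_card_eqI:
  assumes "finite V" and "\<And>S. P S \<Longrightarrow> S \<subseteq> V" and "\<And>S. P S \<Longrightarrow> card S \<le> k"
    and "\<exists>S. P S \<and> card S = k"
  shows "Max (card ` {S. P S}) = k"
proof (rule Max_eqI)
  have "{S. P S} \<subseteq> Pow V" using assms(2) by blast
  then show "finite (card ` {S. P S})" using assms(1) by (simp add: finite_subset)
qed (use assms(3,4) in auto)

locale diameter_two =
  fixes V :: "'a set" and E :: "'a \<Rightarrow> 'a \<Rightarrow> bool"
  assumes simple: "simple_graph V E"
    and short_walk: "\<And>u v. u \<in> V \<Longrightarrow> v \<in> V \<Longrightarrow> \<exists>p. walk_between V E u v p \<and> length p \<le> 3"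
begin

lemma adjacent_in_V: "E u v \<Longrightarrow> u \<in> V \<and> v \<in> V"
  using simple by (simp add: simple_graph_def)

lemma adjacent_sym: "E u v \<Longrightarrow> E v u"
  using simple by (simp add: simple_graph_def)

lemma adjacent_neq: "E u v \<Longrightarrow> u \<noteq> v"
  using simple by (auto simp: simple_graph_def)

lemma connected: "V \<noteq> {} \<Longrightarrow> connected_graph V E"
  using simple short_walk by (auto simp: connected_graph_def)

lemma dist_le_2: "u \<in> V \<Longrightarrow> v \<in> V \<Longrightarrow> dist V E u v \<le> 2"
  using short_walk dist_le_walk_length
  by (metis diff_le_mono le_trans numeral_3_eq_3 diff_Suc_1 numeral_2_eq_2)

lemma dist_adjacent: "E u v \<Longrightarrow> dist V E u v = 1"
proof -
  assume uv: "E u v"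
  then have walk: "walk_between V E u v [u, v]"
    using adjacent_in_V walk_between_edge by metis
  show ?thesis
    using dist_le_walk_length[OF walk] dist_eq_0_imp_eq[OF walk] adjacent_neq[OF uv] by fastforce
qed

lemma dist_nonadjacent: "u \<in> V \<Longrightarrow> v \<in> V \<Longrightarrow> u \<noteq> v \<Longrightarrow> \<not> E u v \<Longrightarrow> dist V E u v = 2"
  using short_walk dist_le_2 dist_eq_0_imp_eq dist_eq_1_imp_adjacent
  by (metis One_nat_def le_Suc_eq le_zero_eq numeral_2_eq_2)

lemma geodesic_three_distinct:
  assumes g: "geodesic V E p" and xyz: "{x, y, z} \<subseteq> set p" "x \<noteq> y" "y \<noteq> z" "x \<noteq> z"
  shows "\<exists>a b c. {a, b, c} = {x, y, z} \<and> E a b \<and> E b c \<and> a \<noteq> c \<and> \<not> E a c"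
proof -
  have w: "walk V E p" and l: "length p = Suc (dist V E (hd p) (last p))"
    using g by (auto simp: geodesic_def)
  then have "hd p \<in> V" "last p \<in> V" by (auto simp: walk_def)
  then have "length p \<le> 3" using l dist_le_2 by simp
  moreover have "card {x, y, z} \<le> length p"
    using card_mono[OF _ xyz(1)] card_length[of p] by (metis List.finite_set le_trans)
  ultimately have "length p = 3" using xyz(2-4) by simp
  then obtain a b c where p: "p = [a, b, c]"
    by (auto simp: numeral_3_eq_3 length_Suc_conv)
  have "E a b" "E b c" using w p by (auto simp: walk_def)
  moreover have "dist V E a c = 2" using l p by simp
  moreover have "a \<in> V" using w p by (simp add: walk_def)
  ultimately have "a \<noteq> c" "\<not> E a c"
    using dist_adjacent dist_le_walk_length[OF walk_between_singleton[where E = E]] by force+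
  moreover have "{a, b, c} = {x, y, z}"
    using xyz p \<open>length p = 3\<close> by auto
  ultimately show ?thesis using \<open>E a b\<close> \<open>E b c\<close> by blast
qed

lemma gp_set_iff_no_induced_path:
  assumes "S \<subseteq> V"
  shows "gp_set V E S \<longleftrightarrow> (\<forall>a\<in>S. \<forall>b\<in>S. \<forall>c\<in>S. E a b \<and> E b c \<and> a \<noteq> c \<longrightarrow> E a c)"
proof
  assume gp: "gp_set V E S"
  show "\<forall>a\<in>S. \<forall>b\<in>S. \<forall>c\<in>S. E a b \<and> E b c \<and> a \<noteq> c \<longrightarrow> E a c"
  proof (intro ballI impI, rule ccontr)
    fix a b c assume abc: "a \<in> S" "b \<in> S" "c \<in> S" "E a b \<and> E b c \<and> a \<noteq> c" "\<not> E a c"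
    then have "a \<in> V" "b \<in> V" "c \<in> V" "a \<noteq> b" "b \<noteq> c"
      using adjacent_in_V adjacent_neq by blast+
    then have "walk_between V E a c [a, b, c]" and "dist V E a c = 2"
      using abc walk_between_path3 dist_nonadjacent by auto
    then have "geodesic V E [a, b, c]"
      by (simp add: geodesic_def walk_between_def)
    moreover have "\<not> (\<exists>p. geodesic V E p \<and> a \<in> set p \<and> b \<in> set p \<and> c \<in> set p)"
      using gp abc \<open>a \<noteq> b\<close> \<open>b \<noteq> c\<close> unfolding gp_set_def by blast
    moreover have "a \<in> set [a, b, c]" "b \<in> set [a, b, c]" "c \<in> set [a, b, c]" by simp_all
    ultimately show False by blast
  qed
next
  assume no_path: "\<forall>a\<in>S. \<forall>b\<in>S. \<forall>c\<in>S. E a b \<and> E b c \<and> a \<noteq> c \<longrightarrow> E a c"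
  show "gp_set V E S"
    unfolding gp_set_def
  proof (intro conjI assms ballI impI notI)
    fix x y z assume xyz: "x \<in> S" "y \<in> S" "z \<in> S" "x \<noteq> y \<and> y \<noteq> z \<and> x \<noteq> z"
      and "\<exists>p. geodesic V E p \<and> x \<in> set p \<and> y \<in> set p \<and> z \<in> set p"
    then obtain p where p: "geodesic V E p" "{x, y, z} \<subseteq> set p" by blast
    from xyz(4) have "x \<noteq> y" "y \<noteq> z" "x \<noteq> z" by simp_all
    then obtain a b c where abc: "{a, b, c} = {x, y, z}" "E a b" "E b c" "a \<noteq> c" "\<not> E a c"
      using geodesic_three_distinct[OF p] by blast
    then have "{a, b, c} \<subseteq> S"
      using xyz(1-3) by simp
    with no_path abc show False by blast
  qed
qed

lemma MMD_nonadjacent: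
  assumes "u \<in> V" and "v \<in> V" and "u \<noteq> v" and "\<not> E u v"
  shows "MMD V E u v"
proof -
  have "dist V E u v = 2" and "dist V E v u = 2"
    using assms adjacent_sym dist_nonadjacent by metis+
  then show ?thesis
    using assms(1,2) dist_le_2 by (simp add: MMD_def maximally_distant_def)
qed

lemma not_maximally_distant_adjacent:
  assumes "E u v" and "E u w" and "w \<noteq> v" and "\<not> E v w"
  shows "\<not> maximally_distant V E u v"
proof -
  have "dist V E v w = 2"
    using assms adjacent_in_V dist_nonadjacent by metis
  then show ?thesis
    using assms(1,2) adjacent_in_V dist_adjacent by (force simp: maximally_distant_def)
qed

end

definition multipartite_adj :: "'a set \<Rightarrow> ('a \<Rightarrow> 'b) \<Rightarrow> 'a \<Rightarrow> 'a \<Rightarrow> bool" where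
  "multipartite_adj V part u v \<longleftrightarrow> u \<in> V \<and> v \<in> V \<and> part u \<noteq> part v"

locale complete_multipartite =
  fixes V :: "'a set" and part :: "'a \<Rightarrow> 'b"
  assumes finite_V: "finite V"
    and other_part: "\<And>v. v \<in> V \<Longrightarrow> \<exists>w\<in>V. part w \<noteq> part v"
begin

sublocale diameter_two V "multipartite_adj V part"
proof
  show "simple_graph V (multipartite_adj V part)"
    using finite_V by (auto simp: simple_graph_def multipartite_adj_def)
  fix u v assume uv: "u \<in> V" "v \<in> V"
  show "\<exists>p. walk_between V (multipartite_adj V part) u v p \<and> length p \<le> 3"
  proof (cases "part u = part v")
    case True
    obtain w where "w \<in> V" "part w \<noteq> part u" using other_part[OF uv(1)] by blast
    then have "walk_between V (multipartite_adj V part) u v [u, w, v]"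
      using uv True by (intro walk_between_path3) (auto simp: multipartite_adj_def)
    then show ?thesis by fastforce
  next
    case False
    then have "walk_between V (multipartite_adj V part) u v [u, v]"
      using uv by (intro walk_between_edge) (auto simp: multipartite_adj_def)
    then show ?thesis by fastforce
  qed
qed

lemma gp_set_one_part_or_inj_on:
  assumes "gp_set V (multipartite_adj V part) S"
  shows "(\<exists>q. \<forall>v\<in>S. part v = q) \<or> inj_on part S"
proof (rule disjCI)
  assume "\<not> inj_on part S"
  then obtain a c where ac: "a \<in> S" "c \<in> S" "a \<noteq> c" "part a = part c"
    by (auto simp: inj_on_def)
  have SV: "S \<subseteq> V" using assms by (simp add: gp_set_def)
  have "part b = part a" if "b \<in> S" for b
  proof (rule ccontr)
    assume "part b \<noteq> part a"
    with ac that SV have "multipartite_adj V part a b" "multipartite_adj V part b c"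
      "\<not> multipartite_adj V part a c"
      by (auto simp: multipartite_adj_def)
    with assms ac that show False
      unfolding gp_set_iff_no_induced_path[OF SV] by blast
  qed
  then show "\<exists>q. \<forall>v\<in>S. part v = q" by blast
qed

lemma gp_set_of_inj_on: "S \<subseteq> V \<Longrightarrow> inj_on part S \<Longrightarrow> gp_set V (multipartite_adj V part) S"
  by (subst gp_set_iff_no_induced_path) (auto simp: multipartite_adj_def inj_on_def)

lemma gp_set_of_one_part: "S \<subseteq> V \<Longrightarrow> \<forall>v\<in>S. part v = q \<Longrightarrow> gp_set V (multipartite_adj V part) S"
  by (subst gp_set_iff_no_induced_path) (auto simp: multipartite_adj_def)

lemma SR_edge_imp_same_part:
  assumes nontrivial: "\<And>v. v \<in> V \<Longrightarrow> \<exists>w\<in>V. w \<noteq> v \<and> part w = part v"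
    and "SR_edge V (multipartite_adj V part) u v"
  shows "part u = part v"
proof (rule ccontr)
  assume "part u \<noteq> part v"
  moreover have uv: "u \<in> V" "v \<in> V" "MMD V (multipartite_adj V part) u v"
    using assms(2) by (auto simp: SR_edge_def)
  moreover obtain w where "w \<in> V" "w \<noteq> v" "part w = part v" using nontrivial[OF uv(2)] by blast
  ultimately have "\<not> maximally_distant V (multipartite_adj V part) u v"
    by (intro not_maximally_distant_adjacent[of u v w]) (auto simp: multipartite_adj_def)
  with uv(3) show False by (simp add: MMD_def)
qed

lemma clique_SR_one_part:
  assumes nontrivial: "\<And>v. v \<in> V \<Longrightarrow> \<exists>w\<in>V. w \<noteq> v \<and> part w = part v"
    and "clique V (SR_edge V (multipartite_adj V part)) K"
  shows "\<exists>q. \<forall>v\<in>K. part v = q"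
  using assms SR_edge_imp_same_part unfolding clique_def by metis

lemma clique_SR_of_one_part:
  assumes "K \<subseteq> V" and "\<forall>v\<in>K. part v = q"
  shows "clique V (SR_edge V (multipartite_adj V part)) K"
  unfolding clique_def SR_edge_def
  using assms MMD_nonadjacent by (auto simp: multipartite_adj_def subset_iff)

end

lemma nat_div_eq_iff:
  fixes v t q :: nat
  assumes "0 < t"
  shows "v div t = q \<longleftrightarrow> q * t \<le> v \<and> v < q * t + t"
proof -
  have "v div t = q \<longleftrightarrow> q \<le> v div t \<and> v div t < Suc q" by auto
  also have "\<dots> \<longleftrightarrow> q * t \<le> v \<and> v < Suc q * t"
    using assms by (simp only: less_eq_div_iff_mult_less_eq div_less_iff_less_mult)
  finally show ?thesis by (simp add: add.commute)
qed

lemma card_le_of_div_fiber: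
  fixes t q :: nat
  assumes "0 < t" and "\<forall>v\<in>S. v div t = q"
  shows "card S \<le> t"
proof -
  have "S \<subseteq> {q * t..<q * t + t}" using assms by (auto simp: nat_div_eq_iff)
  then have "card S \<le> card {q * t..<q * t + t}" by (rule card_mono[rotated]) simp
  then show ?thesis by simp
qed

locale balanced_multipartite =
  fixes r t :: nat
  assumes two_le_r: "2 \<le> r" and two_le_t: "2 \<le> t"
begin

abbreviation "vertices \<equiv> {..<r * t}"
abbreviation "adj \<equiv> multipartite_adj vertices (\<lambda>v. v div t)"

lemma t_pos: "0 < t"
  using two_le_t by simp

sublocale complete_multipartite vertices "\<lambda>v. v div t"
proof
  fix v assume "v \<in> vertices"
  show "\<exists>w\<in>vertices. w div t \<noteq> v div t"
  proof (cases "v < t")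
    case True
    then show ?thesis using two_le_r two_le_t
      by (intro bexI[of _ t]) (auto simp: div_less intro: less_le_trans[of t "2 * t"])
  next
    case False
    then show ?thesis
      using two_le_r two_le_t by (intro bexI[of _ 0]) (auto simp: div_greater_zero_iff)
  qed
qed simp

lemma parts_nontrivial:
  assumes "v \<in> vertices"
  shows "\<exists>w\<in>vertices. w \<noteq> v \<and> w div t = v div t"
proof -
  define j where "j = (if v mod t = 0 then 1 else 0 :: nat)"
  define w where "w = v div t * t + j"
  have "j < t" using two_le_t by (simp add: j_def)
  then have "w div t = v div t" by (simp add: w_def)
  moreover have "w mod t = j" using \<open>j < t\<close> by (simp add: w_def)
  then have "w \<noteq> v" by (auto simp: j_def split: if_splits)
  moreover have "v div t < r" using assms by (simp add: less_mult_imp_div_less)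
  then have "v div t * t + t \<le> r * t"
    by (metis add.commute mult_Suc less_eq_Suc_le mult_le_mono1)
  with \<open>j < t\<close> have "w < r * t" by (simp add: w_def)
  ultimately show ?thesis by auto
qed

lemma gp_number_eq: "gp_number vertices adj = max r t"
  unfolding gp_number_def
proof (rule Max_card_eqI)
  fix S assume gp: "gp_set vertices adj S"
  then show S_sub: "S \<subseteq> vertices" by (simp add: gp_set_def)
  from gp_set_one_part_or_inj_on[OF gp] show "card S \<le> max r t"
  proof
    assume "\<exists>q. \<forall>v\<in>S. v div t = q"
    then obtain q where "\<forall>v\<in>S. v div t = q" by blast
    with t_pos have "card S \<le> t" by (rule card_le_of_div_fiber)
    then show ?thesis by simp
  next
    assume "inj_on (\<lambda>v. v div t) S"
    then have "card S = card ((\<lambda>v. v div t) ` S)" by (simp add: card_image)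
    also have "\<dots> \<le> card {..<r}"
      using S_sub by (intro card_mono) (auto simp: less_mult_imp_div_less)
    finally show ?thesis by simp
  qed
next
  have transversal:
    "(\<lambda>i. i * t) ` {..<r} \<subseteq> vertices" "inj_on (\<lambda>v. v div t) ((\<lambda>i. i * t) ` {..<r})"
    using two_le_t by (auto simp: inj_on_def)
  have "card ((\<lambda>i. i * t) ` {..<r}) = r"
    using two_le_t by (simp add: card_image inj_on_def)
  moreover have "gp_set vertices adj ((\<lambda>i. i * t) ` {..<r})"
    using gp_set_of_inj_on[OF transversal] .
  moreover have "{..<t} \<subseteq> vertices" using two_le_r by auto
  then have "gp_set vertices adj {..<t}"
    by (rule gp_set_of_one_part[where q = 0]) simp
  ultimately show "\<exists>S. gp_set vertices adj S \<and> card S = max r t"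
    unfolding max_def by (cases "r \<le> t") auto
qed simp

lemma clique_number_SR_eq:
  "clique_number vertices (SR_edge vertices adj) = t"
  unfolding clique_number_def
proof (rule Max_card_eqI)
  fix K assume K: "clique vertices (SR_edge vertices adj) K"
  then show "K \<subseteq> vertices" by (simp add: clique_def)
  obtain q where "\<forall>v\<in>K. v div t = q"
    using clique_SR_one_part[OF parts_nontrivial K] by blast
  with t_pos show "card K \<le> t" by (rule card_le_of_div_fiber)
next
  have "{..<t} \<subseteq> vertices" using two_le_r by auto
  then have "clique vertices (SR_edge vertices adj) {..<t}"
    by (rule clique_SR_of_one_part[where q = 0]) simp
  then show "\<exists>K. clique vertices (SR_edge vertices adj) K \<and> card K = t"
    by auto
qed simp

end

theorem proposition3p5:
  fixes r t :: nat
  assumes "2 \<le> t" and "t \<le> r"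
  shows "\<exists>(V :: nat set) E. connected_graph V E \<and> gp_number V E = r
           \<and> clique_number V (SR_edge V E) = t"
proof -
  interpret balanced_multipartite r t using assms by unfold_locales simp_all
  have "0 \<in> {..<r * t}" using assms by simp
  then show ?thesis
    using connected gp_number_eq clique_number_SR_eq assms(2) by (metis empty_iff max_absorb1)
qed

end
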